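(* For each non-negative integer $\lambda$, there are either no regular Stanley sequences with character $\lambda$, or else infinitely many.
   Context: A set of non-negative integers is 3-free if no three of its elements form an arithmetic progression. For a finite 3-free set $A=\{a_0<\cdots<a_k\}$ of non-negative integers, the Stanley sequence $S(A)=(a_n)_{n\ge0}$ is the increasing sequence with initial terms $a_0,\ldots,a_k$ in which each subsequent $a_{n+1}$ is the smallest integer greater than $a_n$ such that $\{a_0,\ldots,a_{n+1}\}$ is 3-free. Throughout, Stanley sequences are in root position ($a_0=0$). A Stanley sequence $(a_n)$ is independent with character $\lambda$ if for all sufficiently large $k$: $a_{2^k+i}=a_{2^k}+a_i$ for $0\le i<2^k$, and $a_{2^k}=2a_{2^k-1}-\lambda+1$. A Stanley sequence $(a_n)$ is regular with character $\lambda$ if there exist a constant $\sigma$ and an independent Stanley sequence $(a'_n)$ of character $\lambda$ such that for all large $k$ and $0\le i<2^k$: $a_{2^k-\sigma+i}=a_{2^k-\sigma}+a'_i$ and $a_{2^k-\sigma}=2a_{2^k-\sigma-1}-\lambda+1$ (these data are unique). *)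

theory Defs
  imports Main
begin

definition three_free :: "nat set \<Rightarrow> bool" where
  "three_free S \<longleftrightarrow> (\<forall>x\<in>S. \<forall>y\<in>S. \<forall>z\<in>S. x < y \<and> y < z \<longrightarrow> x + z \<noteq> 2 * y)"

text \<open>Stanley sequence in root position: a = S(A) for the finite 3-free set
  A = {a 0, ..., a k} with a 0 = 0; every later term is the least integer exceeding the
  previous term that keeps the set of terms 3-free.\<close>
definition stanley :: "(nat \<Rightarrow> nat) \<Rightarrow> bool" where
  "stanley a \<longleftrightarrow> a 0 = 0 \<and> strict_mono a \<and>
     (\<exists>k. three_free (a ` {..k}) \<and>
        (\<forall>n\<ge>k. a (Suc n) = (LEAST m. a n < m \<and> three_free (insert m (a ` {..n})))))"

definition independent :: "(nat \<Rightarrow> nat) \<Rightarrow> int \<Rightarrow> bool" where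
  "independent a lam \<longleftrightarrow> (\<exists>K. \<forall>k\<ge>K.
      (\<forall>i<2^k. a (2^k + i) = a (2^k) + a i) \<and>
      int (a (2^k)) = 2 * int (a (2^k - 1)) - lam + 1)"

definition regular :: "(nat \<Rightarrow> nat) \<Rightarrow> int \<Rightarrow> bool" where
  "regular a lam \<longleftrightarrow> (\<exists>(sigma::int) a'. stanley a' \<and> independent a' lam \<and>
     (\<exists>K. \<forall>k\<ge>K.
        (\<forall>i<2^k. a (nat (2^k - sigma + int i)) = a (nat (2^k - sigma)) + a' i) \<and>
        int (a (nat (2^k - sigma))) = 2 * int (a (nat (2^k - sigma - 1))) - lam + 1))"

end

theory Submission
  imports Defs "HOL-Library.Discrete_Functions"
begin

text \<open>A regular Stanley sequence of character \<lambda> carries an independent Stanley sequence a of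
  the same character. From some index on, the first 2^(j+1) terms of a are the first 2^j terms
  followed by their translate by a(2^j), and a(2^(j+1)) = 3 a(2^j). For every large k, raise the
  terms of a with index in [2^(k+p), 2^(k+p+1)) by (\<lambda> + 1) 2^p. The gaps between consecutive
  translated blocks only widen, so no new 3-term progressions appear, and the covering property
  of a (beyond some point, every non-term is the third term of a progression of terms) is
  inherited block by block, the extra shift being absorbed by progressions that reach back into
  the previous block. Hence each shifted sequence is again a Stanley sequence, regular of
  character \<lambda> through the same a, and different k give different sequences.\<close>

section \<open>Three-free sets and Stanley sequences\<close>

lemma three_free_subset: "three_free S \<Longrightarrow> T \<subseteq> S \<Longrightarrow> three_free T"
  unfolding three_free_def by blast

lemma three_freeD:
  "three_free S \<Longrightarrow> x \<in> S \<Longrightarrow> y \<in> S \<Longrightarrow> z \<in> S \<Longrightarrow> x < y \<Longrightarrow> y < z \<Longrightarrow> x + z = 2 * y \<Longrightarrow> False"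
  unfolding three_free_def by blast

lemma three_free_insert_large:
  assumes "three_free S" and "\<forall>x\<in>S. 2 * x < m"
  shows "three_free (insert m S)"
  unfolding three_free_def
proof (intro ballI impI)
  fix x y z assume xyz: "x \<in> insert m S" "y \<in> insert m S" "z \<in> insert m S" "x < y \<and> y < z"
  show "x + z \<noteq> 2 * y"
  proof (cases "z = m")
    case True
    with xyz have "y \<in> S" by auto
    with assms(2) True show ?thesis by fastforce
  next
    case False
    with xyz have "z \<in> S" by auto
    with assms(2) xyz have "x \<in> S" "y \<in> S" by fastforce+
    with \<open>z \<in> S\<close> assms(1) xyz show ?thesis unfolding three_free_def by blast
  qed
qed

definition covered :: "nat set \<Rightarrow> nat \<Rightarrow> bool" where
  "covered S m \<longleftrightarrow> (\<exists>x\<in>S. \<exists>y\<in>S. x < y \<and> y < m \<and> x + m = 2 * y)"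

lemma coveredI: "x \<in> S \<Longrightarrow> y \<in> S \<Longrightarrow> x < y \<Longrightarrow> y < m \<Longrightarrow> x + m = 2 * y \<Longrightarrow> covered S m"
  unfolding covered_def by blast

lemma covered_mono: "covered S m \<Longrightarrow> S \<subseteq> T \<Longrightarrow> covered T m"
  unfolding covered_def by blast

lemma not_three_free_insert_covered:
  assumes "three_free S" and "\<forall>v\<in>S. v < m" and "\<not> three_free (insert m S)"
  shows "covered S m"
proof -
  from assms(3) obtain x y z where xyz: "x \<in> insert m S" "y \<in> insert m S" "z \<in> insert m S"
    "x < y" "y < z" "x + z = 2 * y"
    unfolding three_free_def by blast
  have "z = m"
  proof (rule ccontr)
    assume "z \<noteq> m"
    with xyz assms(2) have "x \<in> S" "y \<in> S" "z \<in> S" by fastforce+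
    with xyz show False using three_freeD[OF assms(1)] by blast
  qed
  with xyz show ?thesis by (auto intro: coveredI)
qed

lemma stanley_three_free_prefix:
  assumes "stanley a"
  shows "three_free (a ` {..n})"
proof -
  from assms obtain k where k: "three_free (a ` {..k})"
    "\<forall>n\<ge>k. a (Suc n) = (LEAST m. a n < m \<and> three_free (insert m (a ` {..n})))"
    unfolding stanley_def by blast
  show ?thesis
  proof (induction n)
    case 0
    show ?case by (rule three_free_subset[OF k(1)]) auto
  next
    case (Suc n)
    show ?case
    proof (cases "Suc n \<le> k")
      case True
      then show ?thesis by (intro three_free_subset[OF k(1)]) auto
    next
      case False
      define m where "m = Suc (2 * Max (a ` {..n}))"
      have large: "\<forall>x\<in>a ` {..n}. 2 * x < m"
        unfolding m_def by (simp add: le_imp_less_Suc)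
      have "2 * a n < m" using large by blast
      then have ex: "a n < m \<and> three_free (insert m (a ` {..n}))"
        using three_free_insert_large[OF Suc.IH large] by simp
      have "k \<le> n" using False by simp
      have "a n < a (Suc n) \<and> three_free (insert (a (Suc n)) (a ` {..n}))"
        unfolding k(2)[rule_format, OF \<open>k \<le> n\<close>] by (rule LeastI_ex) (use ex in blast)
      moreover have "a ` {..Suc n} = insert (a (Suc n)) (a ` {..n})"
        by (auto simp: atMost_Suc)
      ultimately show ?thesis by simp
    qed
  qed
qed

lemma stanley_three_free: "stanley a \<Longrightarrow> three_free (range a)"
  unfolding three_free_def
proof (intro ballI impI)
  fix x y z assume "stanley a" and xyz: "x \<in> range a" "y \<in> range a" "z \<in> range a" "x < y \<and> y < z"
  then obtain i j l where ijl: "x = a i" "y = a j" "z = a l" by blast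
  let ?n = "max i (max j l)"
  have "x \<in> a ` {..?n}" "y \<in> a ` {..?n}" "z \<in> a ` {..?n}" using ijl by auto
  with xyz(4) stanley_three_free_prefix[OF \<open>stanley a\<close>, of ?n] show "x + z \<noteq> 2 * y"
    unfolding three_free_def by blast
qed

text \<open>With stanleyI below: beyond its initial terms, a Stanley sequence omits exactly the
  covered integers.\<close>

lemma stanley_covered:
  assumes "stanley a"
  shows "\<exists>t. \<forall>m>t. m \<notin> range a \<longrightarrow> covered (range a) m"
proof -
  from assms obtain k where sm: "strict_mono a"
    and k: "\<forall>n\<ge>k. a (Suc n) = (LEAST m. a n < m \<and> three_free (insert m (a ` {..n})))"
    unfolding stanley_def by blast
  have "covered (range a) m" if m: "a k < m" "m \<notin> range a" for m
  proof -
    define n where "n = Max {i. a i < m}"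
    have fin: "finite {i. a i < m}"
    proof (rule finite_subset[of _ "{..<m}"])
      show "{i. a i < m} \<subseteq> {..<m}"
        using strict_mono_imp_increasing[OF sm] by (auto intro: le_less_trans)
    qed simp
    have "k \<in> {i. a i < m}" using m by simp
    then have kn: "k \<le> n" and an: "a n < m"
      unfolding n_def using Max_ge[OF fin] Max_in[OF fin] by blast+
    have "\<not> a (Suc n) < m" using Max_ge[OF fin, of "Suc n"] unfolding n_def by auto
    moreover have "a (Suc n) \<noteq> m" using m by auto
    ultimately have "m < a (Suc n)" by simp
    then have "\<not> three_free (insert m (a ` {..n}))"
      using not_less_Least[of m "\<lambda>m. a n < m \<and> three_free (insert m (a ` {..n}))"]
        k[rule_format, OF kn] an by auto
    moreover have "\<forall>v\<in>a ` {..n}. v < m"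
      using an strict_mono_less_eq[OF sm] by (auto intro: le_less_trans)
    ultimately have "covered (a ` {..n}) m"
      using not_three_free_insert_covered stanley_three_free_prefix[OF assms] by blast
    then show ?thesis by (rule covered_mono) auto
  qed
  then show ?thesis by blast
qed

lemma stanleyI:
  assumes sm: "strict_mono b" and "b 0 = 0" and tf: "three_free (range b)"
    and cov: "\<forall>m>t. m \<notin> range b \<longrightarrow> covered (range b) m"
  shows "stanley b"
  unfolding stanley_def
proof (intro conjI exI[of _ t] allI impI)
  show "b 0 = 0" "strict_mono b" by fact+
  show "three_free (b ` {..t})" by (rule three_free_subset[OF tf]) auto
  fix n assume "t \<le> n"
  show "b (Suc n) = (LEAST m. b n < m \<and> three_free (insert m (b ` {..n})))"
  proof (rule Least_equality[symmetric])
    have "three_free (insert (b (Suc n)) (b ` {..n}))"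
      by (rule three_free_subset[OF tf]) auto
    then show "b n < b (Suc n) \<and> three_free (insert (b (Suc n)) (b ` {..n}))"
      using sm by (simp add: strict_mono_def)
  next
    fix m assume m: "b n < m \<and> three_free (insert m (b ` {..n}))"
    show "b (Suc n) \<le> m"
    proof (rule ccontr)
      assume "\<not> b (Suc n) \<le> m"
      then have lt: "m < b (Suc n)" by simp
      have below: "v \<in> b ` {..n}" if "v \<in> range b" "v < b (Suc n)" for v
      proof -
        from that obtain i where "v = b i" "b i < b (Suc n)" by auto
        then show ?thesis using strict_mono_less[OF sm, of i "Suc n"] by auto
      qed
      have "m \<notin> range b"
      proof
        assume "m \<in> range b"
        then obtain i where "m = b i" "i \<le> n" using below lt by auto
        then show False using m strict_mono_less_eq[OF sm, of i n] by simp
      qed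
      moreover have "t < m"
        using \<open>t \<le> n\<close> m strict_mono_imp_increasing[OF sm, of n] by linarith
      ultimately obtain x y where xy: "x \<in> range b" "y \<in> range b" "x < y" "y < m" "x + m = 2 * y"
        using cov unfolding covered_def by blast
      then have "x \<in> b ` {..n}" "y \<in> b ` {..n}" using below lt by auto
      with xy m show False using three_freeD[of "insert m (b ` {..n})" x y m] by blast
    qed
  qed
qed

section \<open>Block structure of independent Stanley sequences\<close>

locale independent_stanley =
  fixes a :: "nat \<Rightarrow> nat" and L t K :: nat
  assumes sm: "strict_mono a" and zero: "a 0 = 0" and tf: "three_free (range a)"
    and cov: "\<And>m. t < m \<Longrightarrow> m \<notin> range a \<Longrightarrow> covered (range a) m"
    and block_shift: "\<And>j i. K \<le> j \<Longrightarrow> i < 2^j \<Longrightarrow> a (2^j + i) = a (2^j) + a i"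
    and block_char: "\<And>j. K \<le> j \<Longrightarrow> a (2^j) + L = 2 * a (2^j - 1) + 1"
begin

definition C :: "nat \<Rightarrow> nat" where "C j = a (2^j)"
definition N :: "nat \<Rightarrow> nat" where "N j = a (2^j - 1)"
definition A :: "nat \<Rightarrow> nat set" where "A j = a ` {..<2^j}"
definition good :: "nat \<Rightarrow> bool" where "good j \<longleftrightarrow> K \<le> j \<and> t < C j \<and> L \<le> N j"

lemma C_add_L: "K \<le> j \<Longrightarrow> C j + L = 2 * N j + 1"
  unfolding C_def N_def by (rule block_char)

lemma a_shift: "K \<le> j \<Longrightarrow> i < 2^j \<Longrightarrow> a (2^j + i) = C j + a i"
  unfolding C_def by (rule block_shift)

lemma N_Suc: "K \<le> j \<Longrightarrow> N (Suc j) = C j + N j"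
proof -
  assume j: "K \<le> j"
  have "(2::nat)^Suc j - 1 = 2^j + (2^j - 1)" by simp
  then have "N (Suc j) = a (2^j + (2^j - 1))" by (simp only: N_def)
  also have "\<dots> = C j + N j" unfolding N_def by (rule a_shift[OF j]) simp
  finally show ?thesis .
qed

lemma C_Suc: "K \<le> j \<Longrightarrow> C (Suc j) = 3 * C j"
  using C_add_L[of j] C_add_L[of "Suc j"] N_Suc[of j] by simp

lemma N_lt_C: "N j < C j"
  unfolding N_def C_def using sm by (simp add: strict_mono_def)

lemma C_ge: "2^j \<le> C j"
  unfolding C_def by (rule strict_mono_imp_increasing[OF sm])

lemma A_le_N: "v \<in> A j \<Longrightarrow> v \<le> N j"
  unfolding A_def N_def using strict_mono_less_eq[OF sm] by fastforce

lemma A_lt_C: "v \<in> A j \<Longrightarrow> v < C j"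
  using A_le_N N_lt_C le_less_trans by blast

lemma A_subset_range: "A j \<subseteq> range a"
  unfolding A_def by blast

lemma mem_A: "v \<in> range a \<Longrightarrow> v < C j \<Longrightarrow> v \<in> A j"
  unfolding A_def C_def using strict_mono_less[OF sm] by blast

lemma A_mono: "j \<le> j' \<Longrightarrow> A j \<subseteq> A j'"
  unfolding A_def by (simp add: image_mono)

lemma A_Suc_iff: "K \<le> j \<Longrightarrow> v \<in> A (Suc j) \<longleftrightarrow> v \<in> A j \<or> (\<exists>w\<in>A j. v = C j + w)"
proof
  assume j: "K \<le> j" and "v \<in> A (Suc j)"
  then obtain i where i: "i < 2^Suc j" "v = a i" unfolding A_def by blast
  show "v \<in> A j \<or> (\<exists>w\<in>A j. v = C j + w)"
  proof (cases "i < 2^j")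
    case True
    then show ?thesis using i unfolding A_def by blast
  next
    case False
    then have "i - 2^j < 2^j" "i = 2^j + (i - 2^j)" using i(1) by auto
    then show ?thesis using a_shift[OF j] i unfolding A_def by (metis imageI lessThan_iff)
  qed
next
  assume j: "K \<le> j" and v: "v \<in> A j \<or> (\<exists>w\<in>A j. v = C j + w)"
  show "v \<in> A (Suc j)"
  proof (cases "v \<in> A j")
    case True
    then show ?thesis using A_mono[of j "Suc j"] by auto
  next
    case False
    then obtain i where "i < 2^j" "v = C j + a i" using v unfolding A_def by blast
    then have "v = a (2^j + i)" "2^j + i < 2^Suc j" using a_shift[OF j] by auto
    then show ?thesis unfolding A_def by blast
  qed
qed

lemma good_mono: "good j \<Longrightarrow> j \<le> j' \<Longrightarrow> good j'"
proof -
  assume g: "good j" and jj: "j \<le> j'"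
  then have "(2::nat)^j \<le> 2^j'" "(2::nat)^j - 1 \<le> 2^j' - 1"
    by (simp_all add: power_increasing diff_le_mono)
  then have "C j \<le> C j'" "N j \<le> N j'"
    unfolding C_def N_def using strict_mono_less_eq[OF sm] by auto
  then show ?thesis using g jj unfolding good_def by auto
qed

lemma eventually_good: "\<exists>J. \<forall>j\<ge>J. good j"
proof -
  have "good (K + t + L + 1)"
  proof -
    let ?j = "K + t + L + 1"
    have "?j < 2^?j" by (rule less_exp)
    then have "?j \<le> 2^?j - 1" by linarith
    also have "\<dots> \<le> N ?j" unfolding N_def by (rule strict_mono_imp_increasing[OF sm])
    finally show ?thesis using N_lt_C[of ?j] unfolding good_def by linarith
  qed
  then show ?thesis using good_mono by blast
qed

lemma good_K: "good j \<Longrightarrow> K \<le> j"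
  unfolding good_def by simp

lemma good_C_add_L: "good j \<Longrightarrow> C j + L = 2 * N j + 1 \<and> L \<le> N j"
  using C_add_L unfolding good_def by auto

lemma A_Suc_cases:
  assumes "K \<le> j" and "v \<in> A (Suc j)"
  obtains "v \<in> A j" | w where "w \<in> A j" "v = C j + w"
  using assms A_Suc_iff by blast

lemma A_Suc_I: "K \<le> j \<Longrightarrow> v \<in> A j \<Longrightarrow> v \<in> A (Suc j)"
  and A_Suc_shift_I: "K \<le> j \<Longrightarrow> v \<in> A j \<Longrightarrow> C j + v \<in> A (Suc j)"
  using A_Suc_iff by blast+

text \<open>The integer 2 C j + z lies strictly between A (Suc j) and C (Suc j) = 3 C j, so it is
  covered; its middle term must come from the translate C j + A j.\<close>

lemma ap_below_C:
  assumes g: "good j" and z: "z < C j"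
  shows "(\<exists>x\<in>A j. \<exists>y\<in>A j. z + x = 2 * y) \<or> (\<exists>x\<in>A j. \<exists>y\<in>A j. z + C j + x = 2 * y)"
proof -
  have Kj: "K \<le> j" using g by (rule good_K)
  have C3: "C (Suc j) = 3 * C j" using C_Suc[OF Kj] .
  define m where "m = 2 * C j + z"
  have "m \<notin> range a"
  proof
    assume "m \<in> range a"
    then have "m \<in> A (Suc j)" using mem_A C3 z unfolding m_def by simp
    then show False
      by (cases rule: A_Suc_cases[OF Kj]) (use A_lt_C[of _ j] m_def in fastforce)+
  qed
  moreover have "t < m" using g unfolding good_def m_def by simp
  ultimately obtain x y where xy: "x \<in> range a" "y \<in> range a" "x < y" "y < m" "x + m = 2 * y"
    using cov unfolding covered_def by blast
  then have "x \<in> A (Suc j)" "y \<in> A (Suc j)" using mem_A C3 z unfolding m_def by auto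
  show ?thesis
  proof (cases rule: A_Suc_cases[OF Kj \<open>y \<in> A (Suc j)\<close>])
    case 1
    then show ?thesis using A_le_N[OF 1] xy(5) good_C_add_L[OF g] m_def by simp
  next
    case (2 w)
    then have e: "x + z = 2 * w" using xy(5) m_def by simp
    show ?thesis
    proof (cases rule: A_Suc_cases[OF Kj \<open>x \<in> A (Suc j)\<close>])
      case 1
      then show ?thesis using 2 e by (metis add.commute)
    next
      case (2 u)
      then show ?thesis using \<open>w \<in> A j\<close> e by (metis add.commute add.left_commute)
    qed
  qed
qed

text \<open>The witness is now the non-term 3 C j + r, which lies between A (Suc (Suc j)) and
  C (Suc (Suc j)).\<close>

lemma gap_below_C:
  assumes g: "good j" and r: "r < C j" "r \<notin> A j"
  shows "covered (A j) r \<or> (\<exists>x\<in>A j. \<exists>y\<in>A j. r + C j + x = 2 * y)"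
proof -
  have Kj: "K \<le> j" using g by (rule good_K)
  have Kj1: "K \<le> Suc j" using Kj by simp
  have C3: "C (Suc j) = 3 * C j" using C_Suc[OF Kj] .
  have C9: "C (Suc (Suc j)) = 9 * C j" using C_Suc[OF Kj1] C3 by simp
  have low: "v \<in> A j" if "v \<in> A (Suc j)" "v < C j" for v
    using that by (cases rule: A_Suc_cases[OF Kj]) auto
  define m where "m = 3 * C j + r"
  have "m \<notin> range a"
  proof
    assume "m \<in> range a"
    then have "m \<in> A (Suc (Suc j))" using mem_A C9 r unfolding m_def by simp
    then show False
    proof (cases rule: A_Suc_cases[OF Kj1 \<open>m \<in> A (Suc (Suc j))\<close>])
      case 1
      show False using A_lt_C[OF 1] C3 m_def by simp
    next
      case (2 w)
      then have "r \<in> A (Suc j)" using C3 m_def by simp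
      then show False using low[of r] r by simp
    qed
  qed
  moreover have "t < m" using g unfolding good_def m_def by simp
  ultimately obtain x y where xy: "x \<in> range a" "y \<in> range a" "x < y" "y < m" "x + m = 2 * y"
    using cov unfolding covered_def by blast
  have gg: "C j + L = 2 * N j + 1" "L \<le> N j" using good_C_add_L[OF g] by auto
  have yS: "y \<in> A (Suc (Suc j))" using mem_A[OF xy(2)] xy(4) C9 r m_def by simp
  show ?thesis
  proof (cases rule: A_Suc_cases[OF Kj1 yS])
    case 1
    then show ?thesis
    proof (cases rule: A_Suc_cases[OF Kj \<open>y \<in> A (Suc j)\<close>])
      case 1
      then show ?thesis using A_le_N[OF 1] xy(5) gg m_def by simp
    next
      case (2 w)
      then have e: "x + C j + r = 2 * w" using xy(5) m_def by simp
      have "x \<in> A (Suc j)" using mem_A[OF xy(1)] xy(3) 2 A_lt_C[of w j] C3 by simp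
      then show ?thesis
      proof (cases rule: A_Suc_cases[OF Kj \<open>x \<in> A (Suc j)\<close>])
        case 1
        then show ?thesis using 2 e by (metis add.commute add.assoc)
      next
        case (2 u)
        then show ?thesis using e A_le_N[of w j] \<open>w \<in> A j\<close> gg by simp
      qed
    qed
  next
    case (2 w)
    then have wr: "w < r" and e: "x + r = 3 * C j + 2 * w" using xy(4,5) C3 m_def by auto
    then have wj: "w \<in> A j" using low 2 r by simp
    have "x \<in> A (Suc (Suc j))" using mem_A[OF xy(1)] xy(3,4) C9 r m_def by simp
    then show ?thesis
    proof (cases rule: A_Suc_cases[OF Kj1 \<open>x \<in> A (Suc (Suc j))\<close>])
      case 1
      then show ?thesis using A_le_N[OF 1] N_Suc[OF Kj] e gg r by simp
    next
      case (2 u)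
      then have "u < w" "u + r = 2 * w" using xy(3) e \<open>y = C (Suc j) + w\<close> C3 by auto
      then show ?thesis using low[of u] 2 wr r wj by (auto intro: coveredI)
    qed
  qed
qed

lemma ap_below_C_Suc:
  assumes g: "good j" and z: "z < C (Suc j)"
  shows "\<exists>x\<in>A (Suc j). \<exists>y\<in>A (Suc j). z + x = 2 * y"
proof -
  have Kj: "K \<le> j" using g by (rule good_K)
  note up = A_Suc_I[OF Kj] and upC = A_Suc_shift_I[OF Kj]
  consider "z < C j" | "C j \<le> z" "z < 2 * C j" | "2 * C j \<le> z" by linarith
  then show ?thesis
  proof cases
    case 1
    from ap_below_C[OF g 1] show ?thesis
    proof (elim disjE bexE)
      fix x y assume "x \<in> A j" "y \<in> A j" "z + x = 2 * y"
      then show ?thesis using up by blast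
    next
      fix x y assume "x \<in> A j" "y \<in> A j" "z + C j + x = 2 * y"
      moreover have "z + (C j + x) = 2 * y" using calculation(3) by simp
      ultimately show ?thesis using up upC by blast
    qed
  next
    case 2
    define r where "r = z - C j"
    have r: "r < C j" "z = C j + r" using 2 unfolding r_def by auto
    from ap_below_C[OF g r(1)] show ?thesis
    proof (elim disjE bexE)
      fix x y assume "x \<in> A j" "y \<in> A j" "r + x = 2 * y"
      moreover have "z + (C j + x) = 2 * (C j + y)" using calculation(3) r(2) by simp
      ultimately show ?thesis using upC by blast
    next
      fix x y assume "x \<in> A j" "y \<in> A j" "r + C j + x = 2 * y"
      moreover have "z + x = 2 * y" using calculation(3) r(2) by simp
      ultimately show ?thesis using up by blast
    qed
  next
    case 3
    define r where "r = z - 2 * C j"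
    have r: "r < C j" "z = 2 * C j + r" using 3 z C_Suc[OF Kj] unfolding r_def by auto
    from ap_below_C[OF g r(1)] show ?thesis
    proof (elim disjE bexE)
      fix x y assume "x \<in> A j" "y \<in> A j" "r + x = 2 * y"
      moreover have "z + x = 2 * (C j + y)" using calculation(3) r(2) by simp
      ultimately show ?thesis using up upC by blast
    next
      fix x y assume "x \<in> A j" "y \<in> A j" "r + C j + x = 2 * y"
      moreover have "z + (C j + x) = 2 * (C j + y)" using calculation(3) r(2) by simp
      ultimately show ?thesis using upC by blast
    qed
  qed
qed

lemma ap_below_zero:
  assumes g: "good j" and d: "0 < d" "L + d \<le> C j"
  shows "\<exists>x\<in>A (Suc j). \<exists>y\<in>A (Suc j). 2 * y + d = x"
proof -
  have Kj: "K \<le> j" using g by (rule good_K)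
  have "C j - d < C j" using d by simp
  from ap_below_C[OF g this] show ?thesis
  proof (elim disjE bexE)
    fix x y assume "x \<in> A j" "y \<in> A j" "C j - d + x = 2 * y"
    moreover have "2 * y + d = C j + x" using calculation(3) d by simp
    ultimately show ?thesis using A_Suc_I[OF Kj] A_Suc_shift_I[OF Kj] by blast
  next
    fix x y assume "y \<in> A j" "C j - d + C j + x = 2 * y"
    then have False using A_le_N[of y j] good_C_add_L[OF g] d by arith
    then show ?thesis ..
  qed
qed

end

section \<open>Shifting the blocks of an independent Stanley sequence\<close>

text \<open>The terms with index in [2^(k+p), 2^(k+p+1)) are raised by D * 2^p.\<close>

definition shifted_seq :: "(nat \<Rightarrow> nat) \<Rightarrow> nat \<Rightarrow> nat \<Rightarrow> nat \<Rightarrow> nat" where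
  "shifted_seq a D k n = a n + D * (if n < 2^k then 0 else 2^(floor_log n - k))"

lemma floor_log_block: "i < 2^j \<Longrightarrow> floor_log (2^j + i) = j"
  by (rule floor_log_eqI) auto

lemma inj_shifted_seq:
  assumes "0 < D"
  shows "inj (shifted_seq a D)"
proof -
  have "shifted_seq a D u \<noteq> shifted_seq a D v" if "u < v" for u v
  proof -
    have "shifted_seq a D u (2^u) = a (2^u) + D"
      using floor_log_block[of 0 u] by (simp add: shifted_seq_def)
    moreover have "shifted_seq a D v (2^u) = a (2^u)"
      using that by (simp add: shifted_seq_def)
    ultimately show ?thesis
      using assms fun_cong[of "shifted_seq a D u" "shifted_seq a D v" "2^u"] by auto
  qed
  then show ?thesis by (metis injI linorder_neqE_nat)
qed

lemma exists_block_index: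
  assumes "(2::nat)^k \<le> n"
  shows "\<exists>p i. i < 2^(k+p) \<and> n = 2^(k+p) + i"
proof -
  define q where "q = floor_log n"
  have "0 < n" using assms not_less by fastforce
  then have q: "2^q \<le> n" "n < 2 * 2^q"
    unfolding q_def using floor_log_exp2_le floor_log_exp2_gt by auto
  have "k \<le> q" unfolding q_def using floor_log_le_iff[OF assms] by simp
  then obtain p where "q = k + p" using le_Suc_ex by blast
  then show ?thesis using q by (intro exI[of _ p] exI[of _ "n - 2^q"]) auto
qed

locale shifted_stanley = independent_stanley +
  fixes k D :: nat
  assumes good_pred_k: "good (k - 1)" and k_pos: "0 < k" and L_le_D: "L \<le> D"
    and D_le_C: "L + D \<le> C (k - 1)"
begin

definition b :: "nat \<Rightarrow> nat" where "b = shifted_seq a D k"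
definition E :: "nat \<Rightarrow> nat" where "E p = C (k + p) + D * 2^p"
definition B :: "nat \<Rightarrow> nat set" where "B j = b ` {..<2^j}"

fun maxB :: "nat \<Rightarrow> nat" where
  "maxB 0 = N k"
| "maxB (Suc q) = E q + N (k + q)"

lemma good_k_add: "good (k + p)"
  using good_mono[OF good_pred_k] by simp

lemma good_k_add_pred: "good (k + p - 1)"
  using good_mono[OF good_pred_k] by simp

lemma K_le_k_add: "K \<le> k + p"
  using good_K[OF good_k_add] .

lemma C_N_k_add: "C (k + p) + L = 2 * N (k + p) + 1" "N (k + p) < C (k + p)" "L \<le> N (k + p)"
  using good_C_add_L[OF good_k_add] N_lt_C by auto

lemma C_k_Suc: "C (k + Suc p) = 3 * C (k + p)"
  using C_Suc[OF K_le_k_add] by simp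

lemma N_k_Suc: "N (k + Suc p) = C (k + p) + N (k + p)"
  using N_Suc[OF K_le_k_add] by simp

lemma C_k: "C k = 3 * C (k - 1)"
  using C_Suc[OF good_K[OF good_pred_k]] k_pos by simp

lemma D_pow_le_C: "D * 2^p \<le> C (k + p)"
proof (induction p)
  case 0
  then show ?case using C_k D_le_C by simp
next
  case (Suc p)
  then show ?case using C_k_Suc[of p] by simp
qed

lemma C_k_le: "C k \<le> C (k + p)"
proof (induction p)
  case (Suc p)
  then show ?case using C_k_Suc[of p] by simp
qed simp

lemma b_below: "n < 2^k \<Longrightarrow> b n = a n"
  unfolding b_def shifted_seq_def by simp

lemma b_block: "i < 2^(k+p) \<Longrightarrow> b (2^(k+p) + i) = E p + a i"
proof -
  assume i: "i < 2^(k+p)"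
  have "(2::nat)^k \<le> 2^(k+p)" by (simp add: power_increasing)
  then have "\<not> 2^(k+p) + i < (2::nat)^k" by linarith
  then show ?thesis
    using floor_log_block[OF i] a_shift[OF K_le_k_add i]
    unfolding b_def shifted_seq_def E_def by simp
qed

lemma b_block_start: "b (2^(k+p)) = E p"
  using b_block[of 0 p] zero by simp

lemma b_block_end: "b (2^(k + Suc p) - 1) = E p + N (k + p)"
proof -
  have "(2::nat)^(k + Suc p) - 1 = 2^(k+p) + (2^(k+p) - 1)" by simp
  then show ?thesis using b_block[of "2^(k+p) - 1" p] by (simp add: N_def)
qed

lemma B_k: "B k = A k"
  unfolding B_def A_def using b_below by auto

lemma B_Suc_iff: "v \<in> B (k + Suc p) \<longleftrightarrow> v \<in> B (k + p) \<or> (\<exists>w\<in>A (k + p). v = E p + w)"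
proof
  assume "v \<in> B (k + Suc p)"
  then obtain i where i: "i < 2^(k + Suc p)" "v = b i" unfolding B_def by blast
  show "v \<in> B (k + p) \<or> (\<exists>w\<in>A (k + p). v = E p + w)"
  proof (cases "i < 2^(k+p)")
    case True
    then show ?thesis using i unfolding B_def by blast
  next
    case False
    then have "i - 2^(k+p) < 2^(k+p)" "i = 2^(k+p) + (i - 2^(k+p))" using i(1) by auto
    then show ?thesis using b_block i unfolding A_def by (metis imageI lessThan_iff)
  qed
next
  assume v: "v \<in> B (k + p) \<or> (\<exists>w\<in>A (k + p). v = E p + w)"
  have "(2::nat)^(k+p) < 2^(k + Suc p)" by simp
  then show "v \<in> B (k + Suc p)"
  proof (cases "v \<in> B (k + p)")
    case True
    then show ?thesis using \<open>(2::nat)^(k+p) < 2^(k + Suc p)\<close> unfolding B_def by auto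
  next
    case False
    then obtain i where "i < 2^(k+p)" "v = E p + a i" using v unfolding A_def by blast
    then have "v = b (2^(k+p) + i)" "2^(k+p) + i < (2::nat)^(k + Suc p)" using b_block by auto
    then show ?thesis unfolding B_def by blast
  qed
qed

lemma shift_mem_B: "w \<in> A (k + p) \<Longrightarrow> E p + w \<in> B (k + Suc p)"
  using B_Suc_iff by blast

lemma B_mono: "j \<le> j' \<Longrightarrow> B j \<subseteq> B j'"
  unfolding B_def by (simp add: image_mono)

lemma B_subset_range: "B j \<subseteq> range b"
  unfolding B_def by blast

lemma range_b_mem_B: "v \<in> range b \<Longrightarrow> \<exists>p. v \<in> B (k + p)"
proof -
  assume "v \<in> range b"
  then obtain n where n: "v = b n" by blast
  have "n < 2^n" by (rule less_exp)
  also have "(2::nat)^n \<le> 2^(k+n)" by (simp add: power_increasing)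
  finally show ?thesis using n unfolding B_def by blast
qed

lemma maxB_lt_E: "maxB p < E p"
proof (cases p)
  case 0
  then show ?thesis using C_N_k_add(2)[of 0] by (simp add: E_def)
next
  case (Suc q)
  then show ?thesis using C_N_k_add(2)[of q] C_k_Suc[of q] by (simp add: E_def)
qed

lemma B_le_maxB: "v \<in> B (k + p) \<Longrightarrow> v \<le> maxB p"
proof (induction p arbitrary: v)
  case 0
  then show ?case using B_k A_le_N by simp
next
  case (Suc p)
  then show ?case using B_Suc_iff[of v p] maxB_lt_E[of p] A_le_N by fastforce
qed

lemma E_zero_le: "E 0 \<le> E p"
  using C_k_le[of p] unfolding E_def by (simp add: add_le_mono)

lemma B_below_E_zero: "v \<in> B (k + p) \<Longrightarrow> v < E 0 \<Longrightarrow> v \<in> A k"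
proof (induction p arbitrary: v)
  case 0
  then show ?case using B_k by simp
next
  case (Suc p)
  then show ?case using B_Suc_iff[of v p] E_zero_le[of p] by auto
qed

lemma b_zero: "b 0 = 0"
  using b_below[of 0] zero by simp

lemma strict_mono_b: "strict_mono b"
proof (rule strict_mono_Suc_iff[THEN iffD2], intro allI)
  fix n
  show "b n < b (Suc n)"
  proof (cases "Suc n < 2^k")
    case True
    then show ?thesis using b_below sm by (simp add: strict_mono_def)
  next
    case False
    show ?thesis
    proof (cases "Suc n = 2^k")
      case True
      then have "n = 2^k - 1" by simp
      then have "b n = N k" "b (Suc n) = E 0"
        using b_below[of n] b_block_start[of 0] by (simp_all add: N_def)
      then show ?thesis using maxB_lt_E[of 0] by simp
    next
      case False
      then have "2^k \<le> n" using \<open>\<not> Suc n < 2^k\<close> by simp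
      then obtain p i where pi: "i < 2^(k+p)" "n = 2^(k+p) + i" using exists_block_index by blast
      show ?thesis
      proof (cases "Suc i < 2^(k+p)")
        case True
        then show ?thesis using b_block[OF True] b_block[OF pi(1)] pi(2) sm
          by (simp add: strict_mono_def)
      next
        case False
        then have "Suc n = 2^(k + Suc p)" "n = 2^(k + Suc p) - 1" using pi by auto
        then show ?thesis using b_block_start[of "Suc p"] b_block_end[of p] maxB_lt_E[of "Suc p"]
          by simp
      qed
    qed
  qed
qed

lemma maxB_add_N_lt_E: "maxB p + N (k + p) < E p"
proof (cases p)
  case 0
  then show ?thesis using C_N_k_add[of 0] L_le_D by (simp add: E_def)
next
  case (Suc q)
  have "D \<le> D * 2^q" by simp
  then have "L \<le> D * 2^q" using L_le_D by linarith
  then show ?thesis using Suc C_N_k_add[of q] C_k_Suc[of q] N_k_Suc[of q] by (simp add: E_def)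
qed

lemma two_maxB_le: "2 * maxB p + 1 \<le> E p + L"
proof (cases p)
  case 0
  then show ?thesis using C_N_k_add(1)[of 0] by (simp add: E_def)
next
  case (Suc q)
  then show ?thesis using C_N_k_add(1)[of q] C_k_Suc[of q] by (simp add: E_def)
qed

lemma two_maxB_zero_lt: "2 * maxB 0 < E 0"
  using C_N_k_add[of 0] L_le_D by (simp add: E_def)

lemma two_maxB_lt_E_Suc: "2 * maxB q < E (Suc q)"
  using two_maxB_le[of q] C_N_k_add[of q] C_k_Suc[of q] by (simp add: E_def)

lemma no_ap_low_low_high:
  assumes "x \<in> B (k + p)" "y \<in> B (k + p)" "z \<in> A (k + p)" "x + (E p + z) = 2 * y"
  shows False
proof (cases p)
  case 0
  then show False using assms B_le_maxB[of y p] two_maxB_zero_lt by simp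
next
  case (Suc q)
  have "y \<notin> B (k + q)"
    using assms(4) Suc B_le_maxB[of y q] two_maxB_lt_E_Suc[of q] by auto
  then obtain y' where y': "y' \<in> A (k + q)" "y = E q + y'"
    using assms(2) Suc B_Suc_iff by auto
  have e: "x + C (k + q) + z = 2 * y'"
    using assms(4) y'(2) Suc C_k_Suc[of q] by (simp add: E_def)
  have "x + z + 1 \<le> L" using two_maxB_le[of p] B_le_maxB[OF assms(2)] assms(4) by simp
  then have "x < E 0" using L_le_D by (simp add: E_def)
  then have "x \<in> A k" using B_below_E_zero[OF assms(1)] by simp
  have "C (k + q) + y' \<in> A (Suc (k + q))" using A_Suc_shift_I[OF K_le_k_add y'(1)] .
  moreover have "z \<in> A (k + Suc q)" using assms(3) Suc by simp
  then have "C (k + Suc q) + z \<in> A (Suc (k + Suc q))" by (rule A_Suc_shift_I[OF K_le_k_add])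
  moreover have "x < C (k + q) + y'" "C (k + q) + y' < C (k + Suc q) + z"
    using \<open>x + z + 1 \<le> L\<close> C_N_k_add[of q] A_le_N[OF y'(1)] C_k_Suc[of q] by auto
  moreover have "x + (C (k + Suc q) + z) = 2 * (C (k + q) + y')" using e C_k_Suc[of q] by simp
  ultimately show False
    using three_freeD[OF tf, of x "C (k + q) + y'" "C (k + Suc q) + z"]
      A_subset_range[of k] A_subset_range[of "Suc (k + q)"] A_subset_range[of "Suc (k + Suc q)"]
      \<open>x \<in> A k\<close> by (meson subsetD)
qed

lemma three_free_B: "three_free (B (k + p))"
proof (induction p)
  case 0
  show ?case using three_free_subset[OF tf A_subset_range] B_k by simp
next
  case (Suc p)
  show ?case unfolding three_free_def
  proof (intro ballI impI notI)
    fix x y z assume mem: "x \<in> B (k + Suc p)" "y \<in> B (k + Suc p)" "z \<in> B (k + Suc p)"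
      and ord: "x < y \<and> y < z" and e: "x + z = 2 * y"
    have low: "v \<in> B (k + p)" if vB: "v \<in> B (k + Suc p)" and vu: "v < u" and uB: "u \<in> B (k + p)"
      for u v
    proof (rule ccontr)
      assume "v \<notin> B (k + p)"
      then obtain w where "v = E p + w" using vB B_Suc_iff[of v p] by blast
      then show False using vu B_le_maxB[OF uB] maxB_lt_E[of p] by simp
    qed
    show False
    proof (cases "z \<in> B (k + p)")
      case True
      moreover have "y \<in> B (k + p)" using low[OF mem(2) _ True] ord by simp
      moreover have "x \<in> B (k + p)" using low[OF mem(1) _ True] ord by simp
      ultimately show False using three_freeD[OF Suc.IH, of x y z] ord e by simp
    next
      case False
      then obtain z' where z': "z' \<in> A (k + p)" "z = E p + z'" using mem(3) B_Suc_iff[of z p] by blast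
      show False
      proof (cases "y \<in> B (k + p)")
        case True
        moreover have "x \<in> B (k + p)" using low[OF mem(1) _ True] ord by simp
        ultimately show False using no_ap_low_low_high[OF _ _ z'(1)] e z'(2) by simp
      next
        case False
        then obtain y' where y': "y' \<in> A (k + p)" "y = E p + y'" using mem(2) B_Suc_iff[of y p] by blast
        show False
        proof (cases "x \<in> B (k + p)")
          case True
          then show False
            using B_le_maxB[of x p] A_le_N[OF z'(1)] maxB_add_N_lt_E[of p] e y' z' by simp
        next
          case False
          then obtain x' where x': "x' \<in> A (k + p)" "x = E p + x'" using mem(1) B_Suc_iff[of x p] by blast
          then have "x' < y'" "y' < z'" "x' + z' = 2 * y'" using ord e y' z' by auto
          moreover have "x' \<in> range a" "y' \<in> range a" "z' \<in> range a"
            using A_subset_range x'(1) y'(1) z'(1) by blast+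
          ultimately show False using three_freeD[OF tf] by blast
        qed
      qed
    qed
  qed
qed

lemma three_free_b: "three_free (range b)"
  unfolding three_free_def
proof (intro ballI impI notI)
  fix x y z assume "x \<in> range b" "y \<in> range b" "z \<in> range b" and ord: "x < y \<and> y < z"
    and e: "x + z = 2 * y"
  then obtain p1 p2 p3 where "x \<in> B (k + p1)" "y \<in> B (k + p2)" "z \<in> B (k + p3)"
    using range_b_mem_B by meson
  moreover have "B (k + p) \<subseteq> B (k + max p1 (max p2 p3))" if "p \<le> max p1 (max p2 p3)" for p
    using that B_mono by simp
  ultimately have "x \<in> B (k + max p1 (max p2 p3))" "y \<in> B (k + max p1 (max p2 p3))"
    "z \<in> B (k + max p1 (max p2 p3))"
    by (meson max.cobounded1 max.cobounded2 order_trans subsetD)+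
  then show False using three_freeD[OF three_free_B] ord e by blast
qed

lemma ap_below_C_k_add:
  assumes "z < C (k + p)"
  shows "\<exists>x\<in>A (k + p). \<exists>y\<in>A (k + p). z + x = 2 * y"
proof -
  have "Suc (k + p - 1) = k + p" using k_pos by simp
  then show ?thesis using ap_below_C_Suc[OF good_k_add_pred[of p]] assms by metis
qed

lemma ap_through_shifted_block:
  assumes c: "c = 0 \<or> c = C (k + Q)"
    and u: "0 \<le> z + int (E Q) - 2 * int c" "z + int (E Q) - 2 * int c < int (C (k + Q))"
  shows "\<exists>x\<in>B (k + Suc Q). \<exists>y\<in>A (k + Suc Q). z + int x = 2 * int y"
proof -
  define n where "n = nat (z + int (E Q) - 2 * int c)"
  have "n < C (k + Q)" "int n = z + int (E Q) - 2 * int c" using u unfolding n_def by auto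
  then obtain x y where xy: "x \<in> A (k + Q)" "y \<in> A (k + Q)" "n + x = 2 * y"
    using ap_below_C_k_add by blast
  have "c + y \<in> A (k + Suc Q)"
    using c A_Suc_I[OF K_le_k_add xy(2)] A_Suc_shift_I[OF K_le_k_add xy(2)] by auto
  moreover have "z + int (E Q + x) = 2 * int (c + y)"
    using xy(3) \<open>int n = _\<close> by (simp add: algebra_simps)
  ultimately show ?thesis using shift_mem_B[OF xy(1)] by blast
qed

text \<open>Negative z must be admitted: the induction step reaches them through the shift
  by D * 2^Q.\<close>

lemma ap_through_B:
  "- int (D * 2^Q) \<le> z \<Longrightarrow> z < int (C (k + Q)) \<Longrightarrow>
    \<exists>x\<in>B (k + Q). \<exists>y\<in>A (k + Q). z + int x = 2 * int y"
proof (induction Q arbitrary: z)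
  case 0
  show ?case
  proof (cases "0 \<le> z")
    case True
    moreover have "nat z < C (k + 0)" using True 0 by simp
    ultimately obtain x y where "x \<in> A k" "y \<in> A k" "nat z + x = 2 * y"
      using ap_below_C_k_add by fastforce
    then show ?thesis using True B_k by (intro bexI[of _ x] bexI[of _ y]) auto
  next
    case False
    have "Suc (k - 1) = k" using k_pos by simp
    moreover have "0 < nat (- z)" "L + nat (- z) \<le> C (k - 1)" using False 0 D_le_C by auto
    ultimately obtain x y where "x \<in> A k" "y \<in> A k" "2 * y + nat (- z) = x"
      using ap_below_zero[OF good_pred_k] by metis
    then show ?thesis using False B_k by (intro bexI[of _ x] bexI[of _ y]) auto
  qed
next
  case (Suc Q)
  define c where "c = C (k + Q)"
  define d where "d = D * 2^Q"
  have E: "E Q = c + d" unfolding E_def c_def d_def by simp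
  have "d \<le> c" unfolding c_def d_def by (rule D_pow_le_C)
  have z: "- 2 * int d \<le> z" "z < 3 * int c" using Suc.prems C_k_Suc[of Q] by (simp_all add: c_def d_def)
  have B_up: "B (k + Q) \<subseteq> B (k + Suc Q)" by (rule B_mono) simp
  have A_up: "y \<in> A (k + Q) \<Longrightarrow> y \<in> A (k + Suc Q)" "y \<in> A (k + Q) \<Longrightarrow> c + y \<in> A (k + Suc Q)" for y
    using A_Suc_I[OF K_le_k_add] A_Suc_shift_I[OF K_le_k_add] unfolding c_def by auto
  consider "z < - int d" | "- int d \<le> z" "z < int c" | "int c \<le> z" "z < 2 * int c - int d"
    | "2 * int c - int d \<le> z" by linarith
  then show ?case
  proof cases
    case 1
    then show ?thesis using ap_through_shifted_block[of 0 Q z] z E \<open>d \<le> c\<close> by (simp add: c_def)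
  next
    case 2
    then show ?thesis using Suc.IH[of z] B_up A_up unfolding c_def d_def by blast
  next
    case 3
    then show ?thesis using ap_through_shifted_block[of c Q z] E unfolding c_def by simp
  next
    case 4
    then obtain x y where "x \<in> B (k + Q)" "y \<in> A (k + Q)" "z - 2 * int c + int x = 2 * int y"
      using Suc.IH[of "z - 2 * int c"] z unfolding c_def d_def by fastforce
    moreover have "z + int x = 2 * int (c + y)" using calculation(3) by simp
    ultimately show ?thesis using B_up A_up by blast
  qed
qed

lemma A_k_lift:
  assumes "y \<in> A k"
  shows "\<exists>w\<in>A (k + q). 2 * w + C k = 2 * y + C (k + q)"
proof (induction q)
  case 0
  then show ?case using assms by auto
next
  case (Suc q)
  then obtain w where w: "w \<in> A (k + q)" "2 * w + C k = 2 * y + C (k + q)" by auto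
  then have "C (k + q) + w \<in> A (k + Suc q)" using A_Suc_shift_I[OF K_le_k_add] by simp
  moreover have "2 * (C (k + q) + w) + C k = 2 * y + C (k + Suc q)" using w(2) C_k_Suc[of q] by simp
  ultimately show ?case by blast
qed

lemma covered_shift_B:
  assumes "covered (A (k + p)) r"
  shows "covered (range b) (E p + r)"
proof -
  from assms obtain x y where xy: "x \<in> A (k + p)" "y \<in> A (k + p)" "x < y" "y < r" "x + r = 2 * y"
    unfolding covered_def by blast
  have "E p + x \<in> range b" "E p + y \<in> range b"
    using shift_mem_B[OF xy(1)] shift_mem_B[OF xy(2)] B_subset_range by blast+
  then show ?thesis by (rule coveredI) (use xy in simp_all)
qed

lemma covered_b_gap:
  assumes lo: "E Q + N (k + Q) < m" and hi: "m < E (Suc Q)"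
  shows "covered (range b) m"
proof -
  define w where "w = m - E Q"
  have w: "m = E Q + w" "N (k + Q) < w" using lo unfolding w_def by auto
  show ?thesis
  proof (cases "w < C (k + Q)")
    case True
    have "w \<notin> A (k + Q)" using A_le_N[of w "k + Q"] w(2) by auto
    from gap_below_C[OF good_k_add True this] show ?thesis
    proof
      assume "covered (A (k + Q)) w"
      then show ?thesis using covered_shift_B w(1) by simp
    next
      assume "\<exists>x\<in>A (k + Q). \<exists>y\<in>A (k + Q). w + C (k + Q) + x = 2 * y"
      then obtain x y where "y \<in> A (k + Q)" "w + C (k + Q) + x = 2 * y" by blast
      then show ?thesis using A_le_N[of y "k + Q"] C_N_k_add[of Q] w(2) by simp
    qed
  next
    case False
    have E: "E Q = C (k + Q) + D * 2^Q" "E (Suc Q) = 3 * C (k + Q) + 2 * (D * 2^Q)"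
      using C_k_Suc[of Q] by (simp_all add: E_def)
    have "E Q + C (k + Q) \<le> m" "m < E Q + C (k + Q) + C (k + Q) + D * 2^Q"
      using False hi w(1) E by simp_all
    then have "- int (D * 2^Q) \<le> int m - 2 * int (E Q)" "int m - 2 * int (E Q) < int (C (k + Q))"
      using E(1) by linarith+
    then obtain x y where xy: "x \<in> B (k + Q)" "y \<in> A (k + Q)"
      "int m - 2 * int (E Q) + int x = 2 * int y"
      using ap_through_B by blast
    then have "x + m = 2 * (E Q + y)" by simp
    moreover have "x < E Q + y" using B_le_maxB[OF xy(1)] maxB_lt_E[of Q] by simp
    moreover have "E Q + y < m" using A_le_N[OF xy(2)] lo by simp
    moreover have "x \<in> range b" "E Q + y \<in> range b"
      using xy(1,2) shift_mem_B[of y Q] B_subset_range by blast+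
    ultimately show ?thesis by (intro coveredI[of x _ "E Q + y"])
  qed
qed

text \<open>A term r < L missing from A k is handled at level k and then lifted to level k + Q.\<close>

lemma covered_b_block:
  assumes m: "m = E (Suc Q) + r" "r \<le> N (k + Suc Q)" "m \<notin> range b"
  shows "covered (range b) m"
proof -
  have r_notin: "r \<notin> A (k + Suc Q)" using shift_mem_B B_subset_range m by blast
  have "r < C (k + Suc Q)" using m(2) C_N_k_add(2)[of "Suc Q"] by simp
  from gap_below_C[OF good_k_add this r_notin] show ?thesis
  proof
    assume "covered (A (k + Suc Q)) r"
    then show ?thesis using covered_shift_B m(1) by simp
  next
    assume "\<exists>x\<in>A (k + Suc Q). \<exists>y\<in>A (k + Suc Q). r + C (k + Suc Q) + x = 2 * y"
    then have "r < L" using A_le_N C_N_k_add[of "Suc Q"] by fastforce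
    moreover have "r \<notin> A (k + 0)" using r_notin A_mono[of k "k + Suc Q"] by auto
    moreover have "r < C (k + 0)" using \<open>r < L\<close> C_N_k_add[of 0] by simp
    ultimately have "covered (A (k + 0)) r \<or> (\<exists>x\<in>A k. \<exists>y\<in>A k. r + C k + x = 2 * y)"
      using gap_below_C[OF good_k_add, of r 0] by simp
    then show ?thesis
    proof
      assume "covered (A (k + 0)) r"
      then have "covered (A (k + Suc Q)) r" by (rule covered_mono) (rule A_mono, simp)
      then show ?thesis using covered_shift_B m(1) by simp
    next
      assume "\<exists>x\<in>A k. \<exists>y\<in>A k. r + C k + x = 2 * y"
      then obtain x y where xy: "x \<in> A k" "y \<in> A k" "r + C k + x = 2 * y" by blast
      then obtain w where w: "w \<in> A (k + Q)" "2 * w + C k = 2 * y + C (k + Q)"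
        using A_k_lift by blast
      have "x + m = 2 * (E Q + w)"
        using xy(3) w(2) m(1) C_k_Suc[of Q] by (simp add: E_def)
      moreover have "x < E Q + w"
        using A_le_N[OF xy(1)] C_N_k_add(2)[of 0] C_k_le[of Q] by (simp add: E_def)
      moreover have "E Q + w < m"
        using A_le_N[OF w(1)] maxB_lt_E[of "Suc Q"] m(1) by simp
      moreover have "x \<in> range b" "E Q + w \<in> range b"
        using xy(1) B_k shift_mem_B[OF w(1)] B_subset_range by blast+
      ultimately show ?thesis by (intro coveredI[of x _ "E Q + w"])
    qed
  qed
qed

lemma maxB_ge: "p \<le> maxB p"
proof (cases p)
  case (Suc q)
  have "Suc q \<le> 2^(k+q)" using less_exp[of "k + q"] k_pos by linarith
  also have "\<dots> \<le> C (k + q)" by (rule C_ge)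
  finally show ?thesis using Suc by (simp add: E_def)
qed simp

lemma maxB_bracket:
  assumes "maxB 1 < m"
  shows "\<exists>Q. maxB (Suc Q) < m \<and> m \<le> maxB (Suc (Suc Q))"
proof -
  define P where "P = (LEAST p. m \<le> maxB p)"
  have P: "m \<le> maxB P" unfolding P_def by (rule LeastI[of _ m]) (rule maxB_ge)
  have "maxB 0 < maxB 1" using maxB_lt_E[of 0] by simp
  then have "P \<noteq> 0" using P assms by (intro notI) simp
  moreover have "P \<noteq> 1" using P assms by (intro notI) simp
  ultimately have "2 \<le> P" by simp
  have "\<not> m \<le> maxB (P - 1)" unfolding P_def by (rule not_less_Least) (use \<open>2 \<le> P\<close> P_def in simp)
  then show ?thesis using P \<open>2 \<le> P\<close>
    by (intro exI[of _ "P - 2"]) (simp add: Suc_diff_Suc numeral_2_eq_2)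
qed

lemma covered_b: "maxB 1 < m \<Longrightarrow> m \<notin> range b \<Longrightarrow> covered (range b) m"
proof -
  assume "maxB 1 < m" "m \<notin> range b"
  then obtain Q where "maxB (Suc Q) < m" "m \<le> maxB (Suc (Suc Q))"
    using maxB_bracket by blast
  then have lo: "E Q + N (k + Q) < m" and hi: "m \<le> E (Suc Q) + N (k + Suc Q)" by simp_all
  show ?thesis
  proof (cases "m < E (Suc Q)")
    case True
    then show ?thesis using covered_b_gap lo by blast
  next
    case False
    then show ?thesis using covered_b_block[of m Q "m - E (Suc Q)"] hi \<open>m \<notin> range b\<close> by simp
  qed
qed

lemma stanley_b: "stanley b"
  using stanleyI[OF strict_mono_b b_zero three_free_b] covered_b by blast

lemma b_regular_block: "Suc k \<le> j \<Longrightarrow> i < 2^j \<Longrightarrow> b (2^j + i) = b (2^j) + a i"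
  using b_block[of i "j - k"] b_block_start[of "j - k"] by simp

lemma b_regular_character: "Suc k \<le> j \<Longrightarrow> b (2^j) + L = 2 * b (2^j - 1) + 1"
proof -
  assume "Suc k \<le> j"
  then obtain q where q: "j = k + Suc q" by (metis add_Suc_right less_eq_Suc_le less_imp_Suc_add)
  show ?thesis using b_block_start[of "Suc q"] b_block_end[of q] C_N_k_add(1)[of q] C_k_Suc[of q]
    unfolding q by (simp add: E_def)
qed

end

section \<open>Infinitely many regular sequences of the same character\<close>

text \<open>The unqualified name independent denotes linear independence from the library.\<close>

lemma independent_stanleyI:
  assumes "stanley a" and "Defs.independent a (int L)"
  shows "\<exists>t K. independent_stanley a L t K"
proof -
  obtain K where K: "\<forall>j\<ge>K. (\<forall>i<2^j. a (2^j + i) = a (2^j) + a i) \<and>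
      int (a (2^j)) = 2 * int (a (2^j - 1)) - int L + 1"
    using assms(2) unfolding Defs.independent_def by blast
  obtain t where "\<forall>m>t. m \<notin> range a \<longrightarrow> covered (range a) m"
    using stanley_covered[OF assms(1)] by blast
  moreover have "a (2^j) + L = 2 * a (2^j - 1) + 1" if "K \<le> j" for j
    using K that by fastforce
  ultimately have "independent_stanley a L t K"
    using assms(1) stanley_three_free K unfolding stanley_def by unfold_locales auto
  then show ?thesis by blast
qed

lemma regular_if_blocks:
  assumes "stanley a'" and "Defs.independent a' lam"
    and "\<forall>j\<ge>J. (\<forall>i<2^j. b (2^j + i) = b (2^j) + a' i) \<and>
      int (b (2^j)) = 2 * int (b (2^j - 1)) - lam + 1"
  shows "regular b lam"
proof -
  have "nat ((2::int)^j - 0 + int i) = 2^j + i" "nat ((2::int)^j - 0) = 2^j"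
    "nat ((2::int)^j - 0 - 1) = 2^j - 1" for i j
    by (simp_all add: nat_add_distrib nat_power_eq nat_diff_distrib')
  then show ?thesis
    unfolding regular_def using assms
    by (intro exI[of _ 0] exI[of _ a'] conjI exI[of _ J]) (auto simp: nat_power_eq)
qed

lemma stanley_independent_shifted:
  assumes "stanley a" and "Defs.independent a (int L)"
  shows "\<exists>J. \<forall>k\<ge>J. stanley (shifted_seq a (L + 1) k) \<and> regular (shifted_seq a (L + 1) k) (int L)"
proof -
  obtain t K where "independent_stanley a L t K" using independent_stanleyI[OF assms] by blast
  then interpret independent_stanley a L t K .
  obtain J where J: "\<forall>j\<ge>J. good j" using eventually_good by blast
  have "stanley (shifted_seq a (L + 1) k) \<and> regular (shifted_seq a (L + 1) k) (int L)"
    if k: "max (Suc J) (2 * L + 2) \<le> k" for k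
  proof -
    have "k - 1 < 2^(k - 1)" by (rule less_exp)
    then have "L + (L + 1) \<le> C (k - 1)" using C_ge[of "k - 1"] k by linarith
    moreover have "good (k - 1)" "0 < k" using J k by auto
    ultimately interpret shifted_stanley a L t K k "L + 1"
      by unfold_locales auto
    have "\<forall>j\<ge>Suc k. (\<forall>i<2^j. b (2^j + i) = b (2^j) + a i) \<and>
        int (b (2^j)) = 2 * int (b (2^j - 1)) - int L + 1"
      using b_regular_block b_regular_character by fastforce
    then show ?thesis using stanley_b regular_if_blocks[OF assms] unfolding b_def by blast
  qed
  then show ?thesis by blast
qed

theorem mainTheorem17:
  fixes lam :: int
  assumes "lam \<ge> 0"
  shows "{a. stanley a \<and> regular a lam} = {} \<or> infinite {a. stanley a \<and> regular a lam}"
proof (cases "{a. stanley a \<and> regular a lam} = {}")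
  case False
  then obtain a' where a': "stanley a'" "Defs.independent a' lam"
    unfolding regular_def by blast
  define L where "L = nat lam"
  have lam: "lam = int L" using assms unfolding L_def by simp
  obtain J where J: "\<forall>k\<ge>J. stanley (shifted_seq a' (L + 1) k) \<and> regular (shifted_seq a' (L + 1) k) lam"
    using stanley_independent_shifted[of a' L] a' unfolding lam by blast
  have "shifted_seq a' (L + 1) ` {J..} \<subseteq> {a. stanley a \<and> regular a lam}" using J by auto
  moreover have "infinite (shifted_seq a' (L + 1) ` {J..})"
    using inj_shifted_seq[of "L + 1" a'] by (simp add: finite_image_iff inj_on_subset infinite_Ici)
  ultimately show ?thesis using finite_subset by blast
qed simp

end
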